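(* Let $G$ be a gap-free finite simple graph, $s\geq1$, $e_1,\dots,e_s$ edges of $G$ (repetitions allowed), and $G'$ the graph associated to $(I(G)^{s+1}:e_1\cdots e_s)^{\mathrm{pol}}$. Let $Y=\{y_1,\dots,y_l\}$ be a set of vertices of $G'$, and suppose $u,v\notin Y$ are vertices of $G$ that are even-connected with respect to $e_1\cdots e_s$ via $u=p_0,\dots,p_{2k+1}=v$, such that for every even-connection $u''=p'_0,\dots,p'_{2k'+1}=v''$ with respect to $e_1\cdots e_s$ with $u'',v''\notin Y$ one has $k'\leq k$. Let $H=G'-Y$ and let $\operatorname{st}_H u$ be the set consisting of $u$ and its neighbors in $H$. Then $H-\operatorname{st}_H u$ is the disjoint union of a graph $G''$ obtained from $G$ by deleting vertices (an induced subgraph of $G$) and a set of isolated vertices, each of which is one of the new (polarization) vertices $x'$ of $G'$.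
   Context: $S=K[x_1,\dots,x_n]$ with the $x_i$ the vertices of $G$; $I(G)=(xy: xy\text{ an edge})$; edges identified with monomials; $(J:m)=\{f: fm\in J\}$; $J=(I(G)^{s+1}:e_1\cdots e_s)$ is generated by quadratic monomials. $J^{\mathrm{pol}}$ is generated by $x_ix_j$ ($i\ne j$) with $x_ix_j\in J$ and $x_kx_k'$ with $x_k^2\in J$; $G'$ has vertex set $V(G)\cup\{x_k': x_k^2\in J\}$ and edges $\{x_ix_j: i\ne j, x_ix_j\in J\}\cup\{x_kx_k': x_k^2\in J\}$. For a vertex set $W$, $H-W$ is the induced subgraph on the remaining vertices. Even-connection between $u,v$ (possibly equal) with respect to $e_1,\dots,e_s$: a sequence $p_0,\dots,p_{2k+1}$, $k\ge1$ (repeats allowed), with $p_0=u$, $p_{2k+1}=v$; each $p_{2l+1}p_{2l+2}$ ($0\le l\le k-1$) equal to some $e_i$; for every $i$, $|\{l: p_{2l+1}p_{2l+2}=e_i\}|\le|\{j: e_j=e_i\}|$; and each $p_rp_{r+1}$ ($0\le r\le2k$) an edge of $G$. Gap-free: no two vertex-disjoint edges $uv$, $xy$ with no edge between $\{u,v\}$ and $\{x,y\}$. *)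

theory Defs
  imports Main "HOL-Library.Multiset"
begin

definition simple_graph :: "'a set \<Rightarrow> ('a \<Rightarrow> 'a \<Rightarrow> bool) \<Rightarrow> bool" where
  "simple_graph V E \<longleftrightarrow> finite V \<and> (\<forall>a b. E a b \<longrightarrow> a \<in> V \<and> b \<in> V)
     \<and> (\<forall>a b. E a b \<longrightarrow> E b a) \<and> (\<forall>a. \<not> E a a)"

definition gap_free :: "('a \<Rightarrow> 'a \<Rightarrow> bool) \<Rightarrow> bool" where
  "gap_free E \<longleftrightarrow> \<not> (\<exists>u v x y. E u v \<and> E x y \<and> u \<noteq> x \<and> u \<noteq> y \<and> v \<noteq> x \<and> v \<noteq> y
       \<and> \<not> E u x \<and> \<not> E u y \<and> \<not> E v x \<and> \<not> E v y)"

text \<open>Monomials in the variables (vertices) are multisets of vertices; the edge xy is the monomial {#x,y#}.\<close>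
definition edge_mono :: "'a \<times> 'a \<Rightarrow> 'a multiset" where
  "edge_mono e = {#fst e, snd e#}"

text \<open>Monomial m lies in I(G)^n iff it is divisible by a product of n edges of G.\<close>
definition in_edge_ideal_pow :: "('a \<Rightarrow> 'a \<Rightarrow> bool) \<Rightarrow> nat \<Rightarrow> 'a multiset \<Rightarrow> bool" where
  "in_edge_ideal_pow E n m \<longleftrightarrow>
     (\<exists>fs. length fs = n \<and> (\<forall>f\<in>set fs. E (fst f) (snd f)) \<and> sum_list (map edge_mono fs) \<subseteq># m)"

text \<open>Monomial m lies in (I(G)^(s+1) : e_1...e_s), es = [e_1,...,e_s].\<close>
definition in_colon :: "('a \<Rightarrow> 'a \<Rightarrow> bool) \<Rightarrow> ('a \<times> 'a) list \<Rightarrow> 'a multiset \<Rightarrow> bool" where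
  "in_colon E es m \<longleftrightarrow> in_edge_ideal_pow E (Suc (length es)) (m + sum_list (map edge_mono es))"

text \<open>The graph G' of the polarization: original vertex x is Inl x, the new vertex x' is Inr x.\<close>
definition polG_vertices :: "'a set \<Rightarrow> ('a \<Rightarrow> 'a \<Rightarrow> bool) \<Rightarrow> ('a \<times> 'a) list \<Rightarrow> ('a + 'a) set" where
  "polG_vertices V E es = Inl ` V \<union> Inr ` {x \<in> V. in_colon E es {#x, x#}}"

fun polG_edge :: "'a set \<Rightarrow> ('a \<Rightarrow> 'a \<Rightarrow> bool) \<Rightarrow> ('a \<times> 'a) list \<Rightarrow> 'a + 'a \<Rightarrow> 'a + 'a \<Rightarrow> bool" where
  "polG_edge V E es (Inl x) (Inl y) = (x \<in> V \<and> y \<in> V \<and> x \<noteq> y \<and> in_colon E es {#x, y#})"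
| "polG_edge V E es (Inl x) (Inr y) = (x \<in> V \<and> x = y \<and> in_colon E es {#x, x#})"
| "polG_edge V E es (Inr x) (Inl y) = (y \<in> V \<and> x = y \<and> in_colon E es {#x, x#})"
| "polG_edge V E es (Inr x) (Inr y) = False"

definition even_connection :: "('a \<Rightarrow> 'a \<Rightarrow> bool) \<Rightarrow> ('a \<times> 'a) list \<Rightarrow> 'a \<Rightarrow> 'a \<Rightarrow> nat \<Rightarrow> (nat \<Rightarrow> 'a) \<Rightarrow> bool" where
  "even_connection E es u v k p \<longleftrightarrow>
     k \<ge> 1 \<and> p 0 = u \<and> p (2*k+1) = v
     \<and> (\<forall>l<k. \<exists>i<length es. {p (2*l+1), p (2*l+2)} = {fst (es!i), snd (es!i)})
     \<and> (\<forall>i<length es. card {l. l < k \<and> {p (2*l+1), p (2*l+2)} = {fst (es!i), snd (es!i)}}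
                     \<le> card {j. j < length es \<and> {fst (es!j), snd (es!j)} = {fst (es!i), snd (es!i)}})
     \<and> (\<forall>r\<le>2*k. E (p r) (p (Suc r)))"

end

theory Submission
  imports Defs
begin

text \<open>
  A quadratic monomial ab lies in J = (I(G)^(s+1) : e_1...e_s) iff a and b are joined by a walk
  in G whose bridges form a sub-multiset of e_1, ..., e_s; without bridges this just says that ab
  is an edge of G. Hence every edge of G' - Y between old vertices that is not an edge of G, and
  every edge at a new vertex x', comes from an even-connection a...b between vertices outside Y,
  and it suffices to show that u is joined in G' to a or b. If a...b shares a bridge with the
  maximal even-connection u...v, splice the two there. Otherwise apply gap-freeness to the first
  edge u p_1 and the first bridge of a...b: either u is adjacent to an end of that bridge, which
  joins u to a or b, or p_1 is, and then a...b followed by u...v without its first edge is an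
  even-connection from a or b to v that is longer than the maximal one.
\<close>


lemma count_mset_eq_card: "count (mset xs) x = card {i. i < length xs \<and> xs ! i = x}"
  by (simp add: count_mset count_list_eq_length_filter length_filter_conv_card eq_commute)

lemma mset_subseteq_mset_iff_card:
  "mset xs \<subseteq># mset ys \<longleftrightarrow> set xs \<subseteq> set ys \<and>
     (\<forall>i<length ys. card {l. l < length xs \<and> xs ! l = ys ! i} \<le> card {j. j < length ys \<and> ys ! j = ys ! i})"
  (is "_ \<longleftrightarrow> _ \<and> ?counts")
proof
  assume "mset xs \<subseteq># mset ys"
  then show "set xs \<subseteq> set ys \<and> ?counts"
    by (metis count_mset_eq_card mset_subset_eqD mset_subset_eq_count set_mset_mset subsetI)
next
  assume *: "set xs \<subseteq> set ys \<and> ?counts"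
  show "mset xs \<subseteq># mset ys"
  proof (rule mset_subset_eqI)
    fix x
    show "count (mset xs) x \<le> count (mset ys) x"
    proof (cases "x \<in> set xs")
      case True
      then obtain i where "i < length ys" "ys ! i = x"
        using * by (metis in_set_conv_nth subsetD)
      with * have "card {l. l < length xs \<and> xs ! l = x} \<le> card {j. j < length ys \<and> ys ! j = x}"
        by blast
      then show ?thesis
        by (simp add: count_mset_eq_card)
    qed (metis count_mset_0_iff le0)
  qed
qed

lemma image_mset_subseteq_complement:
  "image_mset f A \<subseteq># image_mset f B \<Longrightarrow> \<exists>C. C \<subseteq># B \<and> image_mset f A + image_mset f C = image_mset f B"
proof (induction A arbitrary: B)
  case (add x A)
  then have "f x \<in># image_mset f B"
    by (simp add: insert_subset_eq_iff)
  then obtain y B' where B: "B = add_mset y B'" and y: "f y = f x"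
    by (metis imageE insert_DiffM set_image_mset)
  then have "image_mset f A \<subseteq># image_mset f B'"
    using add.prems by simp
  with add.IH obtain C where C: "C \<subseteq># B'" "image_mset f A + image_mset f C = image_mset f B'"
    by blast
  have "C \<subseteq># B"
    using C(1) B by (metis add_mset_add_single mset_subset_eq_add_left subset_mset.dual_order.trans)
  with C(2) B y show ?case
    by auto
qed auto

lemma add_subseteq_if_disjoint:
  assumes "A \<subseteq># M" "B \<subseteq># M" "set_mset A \<inter> set_mset B = {}"
  shows "A + B \<subseteq># M"
proof (rule mset_subset_eqI)
  fix x
  have "count A x = 0 \<or> count B x = 0"
    using assms(3) by (auto simp: count_eq_zero_iff)
  then show "count (A + B) x \<le> count M x"
    using mset_subset_eq_count[OF assms(1)] mset_subset_eq_count[OF assms(2)] by auto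
qed

lemma sum_mset_image_mset_mset: "sum_mset (image_mset f (mset xs)) = sum_list (map f xs)"
  by (metis mset_map sum_mset_sum_list)

section \<open>Walks with bridges\<close>

abbreviation edge_monos :: "('a \<times> 'a) list \<Rightarrow> 'a multiset multiset" where
  "edge_monos bs \<equiv> image_mset edge_mono (mset bs)"

lemma edge_mono_swap [simp]: "edge_mono (prod.swap b) = edge_mono b"
  by (cases b) (simp add: edge_mono_def add_mset_commute)

lemma edge_mono_eq_iff: "edge_mono b = edge_mono c \<longleftrightarrow> {fst b, snd b} = {fst c, snd c}"
  by (auto simp: edge_mono_def add_eq_conv_diff doubleton_eq_iff)

lemma edge_mono_eq_iff_swap: "edge_mono b = edge_mono c \<longleftrightarrow> c = b \<or> c = prod.swap b"
  by (cases b; cases c) (auto simp: edge_mono_def add_eq_conv_diff)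

lemma edge_mono_memE:
  assumes "a \<in># edge_mono f" and "E (fst f) (snd f)" and sym: "\<And>x y. E x y \<Longrightarrow> E y x"
  obtains x where "edge_mono f = {#a, x#}" "E a x"
proof (cases f)
  case (Pair y z)
  with assms(1,2) that show thesis
    by (auto simp: edge_mono_def add_mset_commute intro: sym)
qed

text \<open>walk E u [b_1, ..., b_k] v says that u, fst b_1, snd b_1, ..., fst b_k, snd b_k, v is a walk
  in E; the b_l are its bridges.\<close>
fun walk :: "('a \<Rightarrow> 'a \<Rightarrow> bool) \<Rightarrow> 'a \<Rightarrow> ('a \<times> 'a) list \<Rightarrow> 'a \<Rightarrow> bool" where
  "walk E u [] v \<longleftrightarrow> E u v"
| "walk E u (b # bs) v \<longleftrightarrow> E u (fst b) \<and> E (fst b) (snd b) \<and> walk E (snd b) bs v"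

lemma walk_append:
  "walk E u (bs @ b # cs) v \<longleftrightarrow> walk E u bs (fst b) \<and> E (fst b) (snd b) \<and> walk E (snd b) cs v"
  by (induction bs arbitrary: u) auto

lemma walk_snoc:
  "walk E u (bs @ [b]) v \<longleftrightarrow> walk E u bs (fst b) \<and> E (fst b) (snd b) \<and> E (snd b) v"
  by (simp add: walk_append)

lemma walk_rev_swap:
  assumes "\<And>x y. E x y \<Longrightarrow> E y x"
  shows "walk E v (rev (map prod.swap bs)) u \<longleftrightarrow> walk E u bs v"
  by (induction bs arbitrary: u) (auto simp: walk_snoc intro: assms)

text \<open>The multiset inclusion encodes the counting condition in the definition of even_connection.\<close>
definition even_conn :: "('a \<Rightarrow> 'a \<Rightarrow> bool) \<Rightarrow> ('a \<times> 'a) list \<Rightarrow> 'a \<Rightarrow> ('a \<times> 'a) list \<Rightarrow> 'a \<Rightarrow> bool" where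
  "even_conn E es u bs v \<longleftrightarrow>
     bs \<noteq> [] \<and> edge_monos bs \<subseteq># edge_monos es \<and> walk E u bs v"

definition bridges :: "(nat \<Rightarrow> 'a) \<Rightarrow> nat \<Rightarrow> ('a \<times> 'a) list" where
  "bridges p k = map (\<lambda>l. (p (2*l+1), p (2*l+2))) [0..<k]"

definition vertex_seq :: "'a \<Rightarrow> ('a \<times> 'a) list \<Rightarrow> 'a \<Rightarrow> nat \<Rightarrow> 'a" where
  "vertex_seq u bs v n =
     (if n = 0 then u else if n > 2 * length bs then v
      else if odd n then fst (bs ! (n div 2)) else snd (bs ! (n div 2 - 1)))"

lemma length_bridges [simp]: "length (bridges p k) = k"
  by (simp add: bridges_def)

lemma bridges_eq_Nil_iff [simp]: "bridges p k = [] \<longleftrightarrow> k = 0"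
  by (simp add: bridges_def)

lemma bridges_vertex_seq: "bridges (vertex_seq u bs v) (length bs) = bs"
  by (rule nth_equalityI) (simp_all add: bridges_def vertex_seq_def)

lemma walk_bridges_iff: "walk E (p 0) (bridges p k) (p (2*k+1)) \<longleftrightarrow> (\<forall>r\<le>2*k. E (p r) (p (Suc r)))"
proof (induction k)
  case (Suc k)
  have "bridges p (Suc k) = bridges p k @ [(p (2*k+1), p (2*k+2))]"
    by (simp add: bridges_def)
  then show ?case
    using Suc by (auto simp: walk_snoc le_Suc_eq numeral_2_eq_2)
qed (simp add: bridges_def)

lemma even_connection_iff:
  "even_connection E es u v k p \<longleftrightarrow> p 0 = u \<and> p (2*k+1) = v \<and> even_conn E es u (bridges p k) v"
proof -
  let ?b = "\<lambda>l. {p (2*l+1), p (2*l+2)}" and ?e = "\<lambda>i. {fst (es!i), snd (es!i)}"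
  let ?xs = "map edge_mono (bridges p k)" and ?ys = "map edge_mono es"
  have xs_nth: "?xs ! l = ?ys ! i \<longleftrightarrow> ?b l = ?e i" if "l < k" "i < length es" for l i
    using that by (simp add: bridges_def edge_mono_eq_iff)
  have ys_nth: "?ys ! j = ?ys ! i \<longleftrightarrow> ?e j = ?e i" if "j < length es" "i < length es" for j i
    using that by (simp add: edge_mono_eq_iff)
  have "set ?xs \<subseteq> set ?ys \<longleftrightarrow> (\<forall>l<k. \<exists>i<length es. ?xs ! l = ?ys ! i)"
    unfolding subset_iff in_set_conv_nth by (metis length_bridges length_map)
  also have "\<dots> \<longleftrightarrow> (\<forall>l<k. \<exists>i<length es. ?b l = ?e i)"
    using xs_nth by blast
  moreover have "card {l. l < length ?xs \<and> ?xs ! l = ?ys ! i} = card {l. l < k \<and> ?b l = ?e i}"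
    and "card {j. j < length ?ys \<and> ?ys ! j = ?ys ! i} = card {j. j < length es \<and> ?e j = ?e i}"
    if "i < length es" for i
    using that xs_nth ys_nth by (auto simp: bridges_def intro!: arg_cong[where f = card])
  ultimately have "edge_monos (bridges p k) \<subseteq># edge_monos es \<longleftrightarrow> (\<forall>l<k. \<exists>i<length es. ?b l = ?e i)
      \<and> (\<forall>i<length es. card {l. l < k \<and> ?b l = ?e i} \<le> card {j. j < length es \<and> ?e j = ?e i})"
    unfolding mset_map[symmetric] mset_subseteq_mset_iff_card by simp
  then show ?thesis
    unfolding even_connection_def even_conn_def
    by (auto simp: walk_bridges_iff[symmetric] Suc_le_eq)
qed

lemma even_connection_vertex_seq:
  assumes "even_conn E es u bs v"
  shows "even_connection E es u v (length bs) (vertex_seq u bs v)"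
proof -
  have "vertex_seq u bs v 0 = u" "vertex_seq u bs v (2 * length bs + 1) = v"
    by (simp_all add: vertex_seq_def)
  with assms show ?thesis
    by (simp only: even_connection_iff bridges_vertex_seq simp_thms)
qed

section \<open>Quadratic monomials in the colon ideal\<close>

fun links :: "'a \<Rightarrow> ('a \<times> 'a) list \<Rightarrow> 'a \<Rightarrow> ('a \<times> 'a) list" where
  "links u [] v = [(u, v)]"
| "links u (b # bs) v = (u, fst b) # links (snd b) bs v"

lemma length_links: "length (links u bs v) = Suc (length bs)"
  by (induction bs arbitrary: u) auto

lemma links_edges: "walk E u bs v \<Longrightarrow> f \<in> set (links u bs v) \<Longrightarrow> E (fst f) (snd f)"
  by (induction bs arbitrary: u) auto

lemma sum_edge_monos_links:
  "sum_list (map edge_mono (links u bs v)) = {#u, v#} + sum_list (map edge_mono bs)"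
  by (induction bs arbitrary: u) (auto simp: edge_mono_def add_mset_commute)

lemma size_sum_edge_monos: "size (sum_list (map edge_mono fs)) = 2 * length fs"
  by (induction fs) (auto simp: edge_mono_def)

text \<open>The links of the walk and the e_i not used as bridges are s + 1 edges dividing u v e_1...e_s.\<close>
lemma in_colon_if_walk:
  assumes es: "\<forall>e\<in>set es. E (fst e) (snd e)" and walk: "walk E u bs v"
    and sub: "edge_monos bs \<subseteq># edge_monos es"
  shows "in_colon E es {#u, v#}"
proof -
  obtain C where C: "C \<subseteq># mset es"
    "edge_monos bs + image_mset edge_mono C = edge_monos es"
    using image_mset_subseteq_complement[OF sub] by blast
  obtain rs where rs: "mset rs = C"
    using ex_mset by blast
  have "length bs + length rs = length es"
    using arg_cong[OF C(2), of size] by (simp flip: rs)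
  moreover have "sum_list (map edge_mono bs) + sum_list (map edge_mono rs) = sum_list (map edge_mono es)"
    using arg_cong[OF C(2), of sum_mset] by (simp add: sum_mset_image_mset_mset flip: rs)
  moreover have "set rs \<subseteq> set es"
    using C(1) rs by (metis set_mset_mono set_mset_mset)
  ultimately show ?thesis
    unfolding in_colon_def in_edge_ideal_pow_def using es links_edges[OF walk]
    by (intro exI[of _ "links u bs v @ rs"]) (auto simp: length_links sum_edge_monos_links add.assoc)
qed

text \<open>a lies on an edge ax of fs; either x = b, or x lies on an edge xy of ds, which becomes the
  first bridge of a walk continued from y.\<close>
lemma walk_if_sum_edge_monos_eq:
  assumes sym: "\<And>x y. E x y \<Longrightarrow> E y x"
    and "\<forall>f\<in>set fs. E (fst f) (snd f)" and "\<forall>d\<in>set ds. E (fst d) (snd d)"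
    and "sum_list (map edge_mono fs) = {#a, b#} + sum_list (map edge_mono ds)"
  shows "\<exists>bs. walk E a bs b \<and> edge_monos bs \<subseteq># edge_monos ds"
  using assms(2-)
proof (induction "length ds" arbitrary: ds fs a rule: less_induct)
  case less
  have "a \<in># sum_list (map edge_mono fs)"
    using less.prems(3) by simp
  then obtain f where f: "f \<in> set fs" "a \<in># edge_mono f"
    by auto
  have "E (fst f) (snd f)"
    using less.prems(1) f(1) by blast
  with f(2) sym obtain x where fx: "edge_mono f = {#a, x#}" and "E a x"
    by (elim edge_mono_memE)
  let ?fs = "remove1 f fs"
  have fs: "add_mset x (sum_list (map edge_mono ?fs)) = add_mset b (sum_list (map edge_mono ds))"
    using less.prems(3) sum_list_map_remove1[OF f(1), of edge_mono] fx by simp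
  show ?case
  proof (cases "x = b")
    case True
    with \<open>E a x\<close> show ?thesis
      by (intro exI[of _ "[]"]) simp
  next
    case False
    then have "x \<in># sum_list (map edge_mono ds)"
      using insert_noteq_member[OF fs[symmetric]] by blast
    then obtain d where d: "d \<in> set ds" "x \<in># edge_mono d"
      by auto
    have "E (fst d) (snd d)"
      using less.prems(2) d(1) by blast
    with d(2) sym obtain y where dy: "edge_mono d = {#x, y#}" and "E x y"
      by (elim edge_mono_memE)
    let ?ds = "remove1 d ds"
    have "length ?ds < length ds"
      using d(1) by (induction ds) auto
    moreover have "\<forall>f\<in>set ?fs. E (fst f) (snd f)" "\<forall>d\<in>set ?ds. E (fst d) (snd d)"
      using less.prems(1,2) set_remove1_subset[of f fs] set_remove1_subset[of d ds] by blast+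
    moreover have "sum_list (map edge_mono ?fs) = {#y, b#} + sum_list (map edge_mono ?ds)"
      using fs sum_list_map_remove1[OF d(1), of edge_mono] dy by (simp add: add_mset_commute)
    ultimately obtain bs where bs: "walk E y bs b"
      "edge_monos bs \<subseteq># edge_monos ?ds"
      using less.hyps by blast
    have ds: "mset ds = add_mset d (mset ?ds)"
      using d(1) by simp
    have "edge_monos ds = add_mset {#x, y#} (edge_monos ?ds)"
      unfolding ds by (simp add: dy)
    with bs \<open>E a x\<close> \<open>E x y\<close> show ?thesis
      by (intro exI[of _ "(x, y) # bs"]) (simp add: edge_mono_def)
  qed
qed

lemma in_colon_doubleton_iff:
  assumes sym: "\<And>x y. E x y \<Longrightarrow> E y x" and es: "\<forall>e\<in>set es. E (fst e) (snd e)"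
  shows "in_colon E es {#a, b#} \<longleftrightarrow>
    (\<exists>bs. walk E a bs b \<and> edge_monos bs \<subseteq># edge_monos es)"
proof
  assume "in_colon E es {#a, b#}"
  then obtain fs where fs: "length fs = Suc (length es)" "\<forall>f\<in>set fs. E (fst f) (snd f)"
    "sum_list (map edge_mono fs) \<subseteq># {#a, b#} + sum_list (map edge_mono es)"
    unfolding in_colon_def in_edge_ideal_pow_def by auto
  \<comment> \<open>both sides have degree 2(s+1), so the divisibility is an equality\<close>
  moreover have "sum_list (map edge_mono fs) = {#a, b#} + sum_list (map edge_mono es)"
  proof (rule ccontr)
    assume "sum_list (map edge_mono fs) \<noteq> {#a, b#} + sum_list (map edge_mono es)"
    with fs(3) have "size (sum_list (map edge_mono fs)) < size ({#a, b#} + sum_list (map edge_mono es))"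
      by (meson mset_subset_size subset_mset.le_neq_trans)
    with fs(1) show False
      by (simp add: size_sum_edge_monos)
  qed
  ultimately show "\<exists>bs. walk E a bs b \<and> edge_monos bs \<subseteq># edge_monos es"
    using walk_if_sum_edge_monos_eq[OF sym _ es] by blast
qed (use in_colon_if_walk[OF es] in blast)

section \<open>Maximal even-connections\<close>

lemma in_colon_if_shared_bridge:
  assumes sym: "\<And>x y. E x y \<Longrightarrow> E y x" and es: "\<forall>e\<in>set es. E (fst e) (snd e)"
    and P: "walk E u P v" "edge_monos P \<subseteq># edge_monos es"
    and Q: "walk E a Q b" "edge_monos Q \<subseteq># edge_monos es"
    and shared: "\<exists>z\<in>set P. edge_mono z \<in> edge_mono ` set Q"
  shows "in_colon E es {#u, a#} \<or> in_colon E es {#u, b#}"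
proof -
  \<comment> \<open>follow P up to its first bridge z that Q also uses, then continue along Q\<close>
  obtain P1 z P2 where P_split: "P = P1 @ z # P2" and "edge_mono z \<in> edge_mono ` set Q"
    and P1: "\<forall>y\<in>set P1. edge_mono y \<notin> edge_mono ` set Q"
    using split_list_first_prop[OF shared] by blast
  then obtain z' Q1 Q2 where Q_split: "Q = Q1 @ z' # Q2" and z': "edge_mono z' = edge_mono z"
    by (metis imageE split_list)
  let ?M = "edge_monos es"
  have P1_sub: "edge_monos P1 \<subseteq># ?M"
  proof -
    have "mset P1 \<subseteq># mset P"
      using P_split by simp
    then show ?thesis
      by (meson P(2) image_mset_subseteq_mono subset_mset.order_trans)
  qed
  have disjoint: "set_mset (edge_monos P1) \<inter> set_mset (edge_monos R) = {}"
    if "mset R \<subseteq># mset Q" for R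
  proof -
    have "edge_mono ` set R \<subseteq> edge_mono ` set Q"
      using set_mset_mono[OF that] by auto
    then show ?thesis
      using P1 by auto
  qed
  have sub_Q: "edge_monos R \<subseteq># ?M" if "mset R \<subseteq># mset Q" for R
    using Q(2) that by (meson image_mset_subseteq_mono subset_mset.order_trans)
  have walk_P1: "walk E u P1 (fst z)"
    using P(1) P_split by (simp add: walk_append)
  consider "z' = z" | "z' = prod.swap z"
    using z' by (auto simp: edge_mono_eq_iff_swap)
  then show ?thesis
  proof cases
    case 1
    have "walk E u (P1 @ z # Q2) b"
      using walk_P1 Q(1) Q_split 1 by (simp add: walk_append)
    moreover have "edge_monos (P1 @ z # Q2) \<subseteq># ?M"
      using add_subseteq_if_disjoint[OF P1_sub sub_Q disjoint, of "z' # Q2"] Q_split 1 by simp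
    ultimately show ?thesis
      using in_colon_if_walk[OF es] by blast
  next
    case 2
    have "walk E (snd z) (rev (map prod.swap Q1)) a"
      using Q(1) Q_split 2 by (simp add: walk_append walk_rev_swap[OF sym])
    then have "walk E u (P1 @ z # rev (map prod.swap Q1)) a"
      using walk_P1 P(1) P_split by (simp add: walk_append)
    moreover have "edge_monos (P1 @ z # rev (map prod.swap Q1)) \<subseteq># ?M"
      using add_subseteq_if_disjoint[OF P1_sub sub_Q disjoint, of "z' # Q1"] Q_split 2
      by (simp add: image_mset.compositionality comp_def)
    ultimately show ?thesis
      using in_colon_if_walk[OF es] by blast
  qed
qed

lemma in_colon_if_disjoint_bridges:
  assumes sym: "\<And>x y. E x y \<Longrightarrow> E y x" and gap_free: "gap_free E"
    and es: "\<forall>e\<in>set es. E (fst e) (snd e)"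
    and P: "walk E u (z # P') v" "edge_monos (z # P') \<subseteq># edge_monos es"
    and Q: "walk E a (w # Q') b" "edge_monos (w # Q') \<subseteq># edge_monos es"
    and disjoint: "set_mset (edge_monos (z # P')) \<inter> set_mset (edge_monos (w # Q')) = {}"
    and maximal: "\<And>x R. x \<in> {a, b} \<Longrightarrow> even_conn E es x R v \<Longrightarrow> length R \<le> Suc (length P')"
  shows "in_colon E es {#u, a#} \<or> in_colon E es {#u, b#}"
proof -
  let ?P = "z # P'" and ?Q = "w # Q'" and ?M = "edge_monos es"
  note PQ_sub = add_subseteq_if_disjoint[OF P(2) Q(2) disjoint]
  have "\<not> (E u (fst z) \<and> E (fst w) (snd w) \<and> u \<noteq> fst w \<and> u \<noteq> snd w \<and> fst z \<noteq> fst w \<and> fst z \<noteq> snd w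
       \<and> \<not> E u (fst w) \<and> \<not> E u (snd w) \<and> \<not> E (fst z) (fst w) \<and> \<not> E (fst z) (snd w))"
    using gap_free unfolding gap_free_def by blast
  moreover have "E u (fst z)" "E (fst w) (snd w)"
    using P(1) Q(1) by simp_all
  ultimately consider "u = fst w" | "u = snd w" | "E u (fst w)" | "E u (snd w)"
    | "E (fst z) (fst w)" | "E (fst z) (snd w)"
    by auto
  then show ?thesis
  proof cases
    case 1
    then have "walk E u [] a"
      using Q(1) sym[of a "fst w"] by simp
    then show ?thesis
      using in_colon_if_walk[OF es, of u "[]" a] by simp
  next
    case 2
    then have "walk E u Q' b"
      using Q(1) by simp
    moreover have "edge_monos Q' \<subseteq># ?M"
      using subset_mset.order_trans[OF _ Q(2), of "edge_monos Q'"] by simp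
    ultimately show ?thesis
      using in_colon_if_walk[OF es] by blast
  next
    case 3
    then have "walk E u ?Q b"
      using Q(1) by simp
    then show ?thesis
      using in_colon_if_walk[OF es _ Q(2)] by blast
  next
    case 4
    then have "walk E u [prod.swap w] a"
      using Q(1) sym[of "fst w" "snd w"] sym[of a "fst w"] by simp
    moreover have "edge_monos [prod.swap w] \<subseteq># ?M"
      using subset_mset.order_trans[OF _ Q(2), of "{#edge_mono w#}"] by simp
    ultimately show ?thesis
      using in_colon_if_walk[OF es] by blast
  next
    case 5
    \<comment> \<open>here and in the next case, P extended backwards through Q is longer than P\<close>
    then have "walk E (fst z) ?Q b"
      using Q(1) by simp
    then have "walk E b (rev (map prod.swap ?Q)) (fst z)"
      by (simp only: walk_rev_swap[OF sym])
    then have "walk E b (rev (map prod.swap ?Q) @ ?P) v"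
      using P(1) by (simp add: walk_append)
    moreover have "edge_monos (rev (map prod.swap ?Q) @ ?P) \<subseteq># ?M"
      using PQ_sub by (simp add: image_mset.compositionality comp_def ac_simps add_mset_commute)
    ultimately have "even_conn E es b (rev (map prod.swap ?Q) @ ?P) v"
      by (simp add: even_conn_def)
    then show ?thesis
      using maximal[of b] by fastforce
  next
    case 6
    then have "walk E a (w # ?P) v"
      using P(1) Q(1) sym[of "fst z" "snd w"] by simp
    moreover have "edge_monos (w # ?P) \<subseteq># ?M"
      using subset_mset.order_trans[OF _ PQ_sub, of "edge_monos (w # ?P)"]
      by (simp add: add_mset_commute)
    ultimately have "even_conn E es a (w # ?P) v"
      by (simp add: even_conn_def)
    then show ?thesis
      using maximal[of a] by fastforce
  qed
qed

lemma in_colon_of_maximal_even_conn: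
  assumes sym: "\<And>x y. E x y \<Longrightarrow> E y x" and gap_free: "gap_free E"
    and es: "\<forall>e\<in>set es. E (fst e) (snd e)"
    and P: "even_conn E es u P v"
    and maximal: "\<And>x R. x \<in> {a, b} \<Longrightarrow> even_conn E es x R v \<Longrightarrow> length R \<le> length P"
    and ab: "in_colon E es {#a, b#}" "\<not> E a b"
  shows "in_colon E es {#u, a#} \<or> in_colon E es {#u, b#}"
proof -
  obtain Q where Q: "walk E a Q b" "edge_monos Q \<subseteq># edge_monos es"
    using ab(1) in_colon_doubleton_iff[OF sym es] by blast
  have P': "walk E u P v" "edge_monos P \<subseteq># edge_monos es"
    using P by (simp_all add: even_conn_def)
  show ?thesis
  proof (cases "\<exists>z\<in>set P. edge_mono z \<in> edge_mono ` set Q")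
    case True
    show ?thesis
      by (rule in_colon_if_shared_bridge[OF sym es P' Q True])
  next
    case False
    then have disjoint:
      "set_mset (edge_monos P) \<inter> set_mset (edge_monos Q) = {}"
      by auto
    obtain w Q' where "Q = w # Q'"
      using Q(1) ab(2) by (cases Q) auto
    moreover obtain z P'' where "P = z # P''"
      using P by (cases P) (auto simp: even_conn_def)
    ultimately show ?thesis
      using in_colon_if_disjoint_bridges[OF sym gap_free es, of u z P'' v a w Q' b] P' Q disjoint maximal
      by simp
  qed
qed

lemma polG_minus_star_decomposition:
  assumes sym: "\<And>x y. E x y \<Longrightarrow> E y x" and irrefl: "\<And>x. \<not> E x x"
    and es: "\<forall>e\<in>set es. E (fst e) (snd e)"
    and u: "u \<in> V" "Inl u \<notin> Y"
    and touch: "\<And>a b. a \<in> V \<Longrightarrow> b \<in> V \<Longrightarrow> Inl a \<notin> Y \<Longrightarrow> Inl b \<notin> Y \<Longrightarrow>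
      in_colon E es {#a, b#} \<Longrightarrow> \<not> E a b \<Longrightarrow> in_colon E es {#u, a#} \<or> in_colon E es {#u, b#}"
  shows "let VH = polG_vertices V E es - Y;
             EH = (\<lambda>a b. a \<in> VH \<and> b \<in> VH \<and> polG_edge V E es a b);
             st = insert (Inl u) {b \<in> VH. EH (Inl u) b};
             W = VH - st
         in \<exists>U Z. U \<subseteq> V \<and> Z \<subseteq> range Inr \<and> W = Inl ` U \<union> Z
              \<and> (\<forall>a\<in>U. \<forall>b\<in>U. EH (Inl a) (Inl b) \<longleftrightarrow> E a b)
              \<and> (\<forall>z\<in>Z. \<forall>w\<in>W. \<not> EH z w)"
proof -
  define VH where "VH = polG_vertices V E es - Y"
  define EH where "EH = (\<lambda>a b. a \<in> VH \<and> b \<in> VH \<and> polG_edge V E es a b)"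
  define W where "W = VH - insert (Inl u) {b \<in> VH. EH (Inl u) b}"
  have W_Inl: "Inl a \<in> W \<longleftrightarrow> a \<in> V \<and> Inl a \<notin> Y \<and> a \<noteq> u \<and> \<not> in_colon E es {#u, a#}" for a
    using u by (auto simp: W_def EH_def VH_def polG_vertices_def)
  have in_colon_edge: "in_colon E es {#a, b#}" if "E a b" for a b
    using in_colon_if_walk[OF es, of a "[]" b] that by simp
  define U where "U = {a. Inl a \<in> W}"
  define Z where "Z = W \<inter> range Inr"
  have "U \<subseteq> V"
    by (auto simp: U_def W_Inl)
  moreover have "W = Inl ` U \<union> Z"
  proof (intro set_eqI iffI)
    fix x
    assume "x \<in> W"
    then show "x \<in> Inl ` U \<union> Z"
      by (cases x) (auto simp: U_def Z_def)
  qed (auto simp: U_def Z_def)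
  moreover have "EH (Inl a) (Inl b) \<longleftrightarrow> E a b" if "a \<in> U" "b \<in> U" for a b
  proof
    assume "EH (Inl a) (Inl b)"
    then have "in_colon E es {#a, b#}"
      by (simp add: EH_def)
    with that touch[of a b] show "E a b"
      by (auto simp: U_def W_Inl)
  next
    assume "E a b"
    have "Inl a \<in> VH" "Inl b \<in> VH"
      using that by (auto simp: U_def W_def)
    moreover have "a \<in> V" "b \<in> V"
      using that by (simp_all add: U_def W_Inl)
    ultimately show "EH (Inl a) (Inl b)"
      using \<open>E a b\<close> irrefl[of a] in_colon_edge[of a b]
      by (auto simp: EH_def)
  qed
  moreover have "\<not> EH z w" if "z \<in> Z" "w \<in> W" for z w
  proof
    assume "EH z w"
    moreover obtain x where "z = Inr x"
      using \<open>z \<in> Z\<close> by (auto simp: Z_def)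
    ultimately have "w = Inl x" "in_colon E es {#x, x#}"
      by (cases w; auto simp: EH_def)+
    with \<open>w \<in> W\<close> touch[of x x] irrefl[of x] show False
      by (auto simp: W_Inl)
  qed
  ultimately have "\<exists>U Z. U \<subseteq> V \<and> Z \<subseteq> range Inr \<and> W = Inl ` U \<union> Z
      \<and> (\<forall>a\<in>U. \<forall>b\<in>U. EH (Inl a) (Inl b) \<longleftrightarrow> E a b) \<and> (\<forall>z\<in>Z. \<forall>w\<in>W. \<not> EH z w)"
    by (intro exI[of _ U] exI[of _ Z]) (auto simp: Z_def)
  then show ?thesis
    unfolding Let_def VH_def EH_def W_def .
qed

theorem lemma6p18:
  fixes V :: "'a set" and E :: "'a \<Rightarrow> 'a \<Rightarrow> bool" and es :: "('a \<times> 'a) list"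
    and Y :: "('a + 'a) set" and u v :: 'a and k :: nat and p :: "nat \<Rightarrow> 'a"
  assumes G: "simple_graph V E" and gf: "gap_free E"
    and s: "length es \<ge> 1" and es_edges: "\<forall>e\<in>set es. E (fst e) (snd e)"
    and Y: "Y \<subseteq> polG_vertices V E es"
    and uv: "u \<in> V" "v \<in> V" "Inl u \<notin> Y" "Inl v \<notin> Y"
    and conn: "even_connection E es u v k p"
    and maxk: "\<forall>u'' v'' k' p'. u'' \<in> V \<and> v'' \<in> V \<and> Inl u'' \<notin> Y \<and> Inl v'' \<notin> Y
                  \<and> even_connection E es u'' v'' k' p' \<longrightarrow> k' \<le> k"
  shows "let VH = polG_vertices V E es - Y;
             EH = (\<lambda>a b. a \<in> VH \<and> b \<in> VH \<and> polG_edge V E es a b);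
             st = insert (Inl u) {b \<in> VH. EH (Inl u) b};
             W = VH - st
         in \<exists>U Z. U \<subseteq> V \<and> Z \<subseteq> range Inr \<and> W = Inl ` U \<union> Z
              \<and> (\<forall>a\<in>U. \<forall>b\<in>U. EH (Inl a) (Inl b) \<longleftrightarrow> E a b)
              \<and> (\<forall>z\<in>Z. \<forall>w\<in>W. \<not> EH z w)"
proof -
  have sym: "\<And>x y. E x y \<Longrightarrow> E y x" and irrefl: "\<And>x. \<not> E x x"
    using G by (auto simp: simple_graph_def)
  have P: "even_conn E es u (bridges p k) v"
    using conn by (simp add: even_connection_iff)
  have maximal: "length R \<le> k"
    if "x \<in> V" "Inl x \<notin> Y" "even_conn E es x R v" for x R
    using maxk that uv even_connection_vertex_seq[OF that(3)] by auto
  show ?thesis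
  proof (rule polG_minus_star_decomposition[OF sym irrefl es_edges uv(1,3)])
    fix a b
    assume "a \<in> V" "b \<in> V" "Inl a \<notin> Y" "Inl b \<notin> Y" "in_colon E es {#a, b#}" "\<not> E a b"
    then show "in_colon E es {#u, a#} \<or> in_colon E es {#u, b#}"
      by (intro in_colon_of_maximal_even_conn[OF sym gf es_edges P]) (auto intro: maximal)
  qed
qed

end
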